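(* Let $(X,\mu,T)$ be a probability-preserving system and $\mathcal{P}$ a finite Borel partition of $X$. Then there is a function $g:\mathbb{N}\cup\{0\}\to[0,\infty)$ with $g(m)=o(m)$ as $m\to\infty$ such that for all bounded (possibly empty) discrete intervals $I,J\subseteq\mathbb{Z}$ for which $I\cup J$ is a discrete interval, \[\mathrm{I}_\mu(\mathcal{P}^J;\mathcal{P}^I\,|\,\mathcal{P}^{I\cap J})\le g(|J\setminus I|).\]
   Context: $\mathcal{P}^F=\bigvee_{n\in F}T^{-n}\mathcal{P}$ for finite $F\subseteq\mathbb{Z}$ (the trivial partition if $F=\emptyset$). $\mathrm{I}_\mu(\cdot;\cdot\,|\,\cdot)$ is conditional mutual information: $\mathrm{I}_\mu(\mathcal{A};\mathcal{B}\,|\,\mathcal{C})=\mathrm{H}_\mu(\mathcal{A}\,|\,\mathcal{C})-\mathrm{H}_\mu(\mathcal{A}\,|\,\mathcal{B}\vee\mathcal{C})$. *)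

theory Defs
  imports "HOL-Probability.Probability" "HOL-Library.Landau_Symbols"
begin

definition pp_system :: "'a measure \<Rightarrow> ('a \<Rightarrow> 'a) \<Rightarrow> bool" where
  "pp_system M T \<longleftrightarrow> prob_space M \<and> T \<in> M \<rightarrow>\<^sub>M M \<and>
     bij_betw T (space M) (space M) \<and> inv_into (space M) T \<in> M \<rightarrow>\<^sub>M M \<and>
     (\<forall>A\<in>sets M. measure M (T -` A \<inter> space M) = measure M A)"

definition fin_partition :: "'a measure \<Rightarrow> 'a set set \<Rightarrow> bool" where
  "fin_partition M P \<longleftrightarrow> finite P \<and> P \<subseteq> sets M \<and> \<Union>P = space M \<and>
     (\<forall>A\<in>P. \<forall>B\<in>P. A \<noteq> B \<longrightarrow> A \<inter> B = {})"

definition Tpow :: "'a measure \<Rightarrow> ('a \<Rightarrow> 'a) \<Rightarrow> int \<Rightarrow> 'a \<Rightarrow> 'a" where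
  "Tpow M T n = (if 0 \<le> n then T ^^ nat n else (inv_into (space M) T) ^^ nat (- n))"

text \<open>P^F = join over n in F of T^{-n} P (nonempty cells); trivial partition if F is empty.\<close>
definition refine :: "'a measure \<Rightarrow> ('a \<Rightarrow> 'a) \<Rightarrow> 'a set set \<Rightarrow> int set \<Rightarrow> 'a set set" where
  "refine M T P F = {C. \<exists>w. (\<forall>n\<in>F. w n \<in> P) \<and>
       C = space M \<inter> (\<Inter>n\<in>F. Tpow M T n -` w n)} - {{}}"

definition join :: "'a set set \<Rightarrow> 'a set set \<Rightarrow> 'a set set" where
  "join A B = {a \<inter> b | a b. a \<in> A \<and> b \<in> B} - {{}}"

text \<open>Conditional entropy H_mu(A | C) (natural log; 0 log 0 = 0).\<close>
definition cond_entropy :: "'a measure \<Rightarrow> 'a set set \<Rightarrow> 'a set set \<Rightarrow> real" where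
  "cond_entropy M A C = - (\<Sum>a\<in>A. \<Sum>c\<in>C.
      measure M (a \<inter> c) * ln (measure M (a \<inter> c) / measure M c))"

definition cond_mutual_info :: "'a measure \<Rightarrow> 'a set set \<Rightarrow> 'a set set \<Rightarrow> 'a set set \<Rightarrow> real" where
  "cond_mutual_info M A B C = cond_entropy M A C - cond_entropy M A (join B C)"

definition dinterval :: "int set \<Rightarrow> bool" where
  "dinterval I \<longleftrightarrow> (\<exists>a b. I = {a..b})"

end

theory Submission
  imports Defs
begin

(*
  Write H(F) for the entropy of the refined partition P^F (ent below).  Because T preserves
  the measure, H(F) is invariant under integer translations of F, so on a discrete interval it
  depends only on the length: H(F) = e(card F) (block_ent).  Conditional entropies of interval
  refinements then telescope into the increments c(n) = e(n+1) - e(n) = H(P | P^{[1,n]})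
  (ent_gain), which are nonnegative and decreasing, since conditioning on a finer partition
  lowers entropy.  For intervals I, J with K = I \<inter> J and m = |J - I| one gets
    I(P^J; P^I | P^K) = (e(|K| + m) - e(|K|)) - (e(|I| + m) - e(|I|))
                      = \<Sum>j<m. c(|K| + j) - c(|I| + j)  \<le>  \<Sum>j<m. c(j) - inf c,
  and a Cesaro argument shows that the right-hand side is o(m).
*)


section \<open>The log-sum inequality\<close>

text \<open>Pointwise form: the tangent-line bound for the logarithm, rescaled.\<close>
lemma log_sum_term:
  fixes x y X Y :: real
  assumes "0 \<le> x" "x \<le> y" "0 < X" "0 < Y"
  shows "x * ln (X / Y) + x - y * X / Y \<le> x * ln (x / y)"
proof (cases "x = 0")
  case False
  then have x: "0 < x" and y: "0 < y" using assms by auto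
  have "ln (X / Y) - ln (x / y) \<le> (X / Y - x / y) / (x / y)"
    using x y assms by (intro ln_diff_le) auto
  also have "\<dots> = y * X / (x * Y) - 1" using x y assms by (simp add: field_simps)
  finally have "x * (ln (X / Y) - ln (x / y)) \<le> x * (y * X / (x * Y) - 1)"
    using x by (intro mult_left_mono) auto
  also have "\<dots> = y * X / Y - x" using x assms by (simp add: field_simps)
  finally show ?thesis by (simp add: algebra_simps)
qed (use assms in simp)

lemma log_sum_inequality:
  fixes x y :: "'i \<Rightarrow> real"
  assumes "finite S" and xy: "\<And>i. i \<in> S \<Longrightarrow> 0 \<le> x i \<and> x i \<le> y i"
  shows "(\<Sum>i\<in>S. x i) * ln ((\<Sum>i\<in>S. x i) / (\<Sum>i\<in>S. y i)) \<le> (\<Sum>i\<in>S. x i * ln (x i / y i))"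
proof -
  let ?X = "\<Sum>i\<in>S. x i" and ?Y = "\<Sum>i\<in>S. y i"
  have X_nonneg: "0 \<le> ?X" using xy by (intro sum_nonneg) auto
  have X_le_Y: "?X \<le> ?Y" using xy by (intro sum_mono) auto
  show ?thesis
  proof (cases "?X = 0")
    case True
    then have "\<forall>i\<in>S. x i = 0" using sum_nonneg_eq_0_iff[OF assms(1)] xy by auto
    then show ?thesis by simp
  next
    case False
    then have X: "0 < ?X" and Y: "0 < ?Y" using X_nonneg X_le_Y by auto
    have "(\<Sum>i\<in>S. x i * ln (?X / ?Y) + x i - y i * ?X / ?Y) \<le> (\<Sum>i\<in>S. x i * ln (x i / y i))"
      using xy X Y by (intro sum_mono log_sum_term) auto
    moreover have "(\<Sum>i\<in>S. x i * ln (?X / ?Y) + x i - y i * ?X / ?Y)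
        = ?X * ln (?X / ?Y) + ?X - ?Y * ?X / ?Y"
      by (simp add: sum.distrib sum_subtractf sum_distrib_right sum_divide_distrib[symmetric])
    ultimately show ?thesis using Y by simp
  qed
qed


section \<open>Entropy of finite partitions\<close>

definition part_entropy :: "'a measure \<Rightarrow> 'a set set \<Rightarrow> real" where
  "part_entropy M A = - (\<Sum>a\<in>A. measure M a * ln (measure M a))"

lemma partition_cell_unique:
  assumes "fin_partition M A" "a \<in> A" "a' \<in> A" "x \<in> a" "x \<in> a'"
  shows "a = a'"
  using assms unfolding fin_partition_def by blast

lemma join_eq_image: "join A C = (\<lambda>(a, c). a \<inter> c) ` (A \<times> C) - {{}}"
  unfolding join_def by auto

context prob_space
begin

lemma partition_measure_sum:
  assumes A: "fin_partition M A" and c: "c \<in> sets M"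
  shows "(\<Sum>a\<in>A. measure M (a \<inter> c)) = measure M c"
proof -
  have "measure M (\<Union>a\<in>A. a \<inter> c) = (\<Sum>a\<in>A. measure M (a \<inter> c))"
  proof (intro finite_measure_finite_Union)
    show "disjoint_family_on (\<lambda>a. a \<inter> c) A" using A
      unfolding disjoint_family_on_def fin_partition_def by blast
  qed (use A c in \<open>auto simp: fin_partition_def\<close>)
  moreover have "(\<Union>a\<in>A. a \<inter> c) = c" using A sets.sets_into_space[OF c]
    unfolding fin_partition_def by auto
  ultimately show ?thesis by simp
qed

text \<open>Summing over all pairwise intersections equals summing over the cells of the join,
  since distinct pairs of cells either give distinct or empty intersections.\<close>
lemma sum_join:
  assumes A: "fin_partition M A" and C: "fin_partition M C" and empty: "f {} = 0"
  shows "(\<Sum>a\<in>A. \<Sum>c\<in>C. f (a \<inter> c)) = (\<Sum>x\<in>join A C. f x)"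
proof -
  let ?cap = "\<lambda>(a, c). a \<inter> c"
  have fin: "finite A" "finite C" using A C unfolding fin_partition_def by auto
  have "(\<Sum>a\<in>A. \<Sum>c\<in>C. f (a \<inter> c)) = (\<Sum>p\<in>A \<times> C. (f \<circ> ?cap) p)"
    by (simp add: sum.cartesian_product case_prod_beta)
  also have "\<dots> = sum f (?cap ` (A \<times> C))"
  proof (rule sum.reindex_nontrivial[symmetric])
    fix p q assume pq: "p \<in> A \<times> C" "q \<in> A \<times> C" "p \<noteq> q" "?cap p = ?cap q"
    obtain a c a' c' where p: "p = (a, c)" and q: "q = (a', c')" by (cases p, cases q)
    have "a \<inter> c = {}"
    proof (rule ccontr)
      assume "a \<inter> c \<noteq> {}"
      then obtain x where "x \<in> a \<inter> c" by blast
      then have "x \<in> a'" "x \<in> c'" using pq(4) unfolding p q by auto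
      moreover have "a \<in> A" "a' \<in> A" "c \<in> C" "c' \<in> C" using pq(1,2) unfolding p q by auto
      ultimately have "a = a'" "c = c'"
        using \<open>x \<in> a \<inter> c\<close> partition_cell_unique[OF A] partition_cell_unique[OF C] by blast+
      then show False using pq(3) unfolding p q by simp
    qed
    then show "f (?cap p) = 0" using empty p by simp
  qed (use fin in simp)
  also have "\<dots> = sum f (?cap ` (A \<times> C) - {{}})"
    using fin empty by (intro sum.mono_neutral_right) auto
  finally show ?thesis unfolding join_eq_image .
qed

lemma cond_entropy_eq:
  assumes A: "fin_partition M A" and C: "fin_partition M C"
  shows "cond_entropy M A C = part_entropy M (join A C) - part_entropy M C"
proof -
  have sets: "A \<subseteq> sets M" "C \<subseteq> sets M" and fin: "finite C"
    using A C unfolding fin_partition_def by auto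
  have split_log: "measure M (a \<inter> c) * ln (measure M (a \<inter> c) / measure M c) =
      measure M (a \<inter> c) * ln (measure M (a \<inter> c)) - measure M (a \<inter> c) * ln (measure M c)"
    if "a \<in> A" "c \<in> C" for a c
  proof (cases "measure M (a \<inter> c) = 0")
    case False
    then have "0 < measure M (a \<inter> c)" using measure_nonneg[of M] by (simp add: less_le)
    moreover have "measure M (a \<inter> c) \<le> measure M c" using that sets
      by (intro finite_measure_mono) auto
    ultimately show ?thesis by (simp add: ln_div algebra_simps)
  qed simp
  have "(\<Sum>a\<in>A. \<Sum>c\<in>C. measure M (a \<inter> c) * ln (measure M c))
      = (\<Sum>c\<in>C. measure M c * ln (measure M c))"
    using partition_measure_sum[OF A] sets fin
    by (subst sum.swap) (auto simp: sum_distrib_right[symmetric] intro!: sum.cong)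
  moreover have "(\<Sum>a\<in>A. \<Sum>c\<in>C. measure M (a \<inter> c) * ln (measure M (a \<inter> c)))
      = (\<Sum>x\<in>join A C. measure M x * ln (measure M x))"
    by (rule sum_join[OF A C]) simp
  ultimately show ?thesis
    unfolding cond_entropy_def part_entropy_def using split_log by (simp add: sum_subtractf)
qed

lemma cond_entropy_nonneg:
  assumes A: "fin_partition M A" and C: "fin_partition M C"
  shows "0 \<le> cond_entropy M A C"
proof -
  have "measure M (a \<inter> c) * ln (measure M (a \<inter> c) / measure M c) \<le> 0"
    if "a \<in> A" "c \<in> C" for a c
  proof -
    have le: "measure M (a \<inter> c) \<le> measure M c" using that A C unfolding fin_partition_def
      by (intro finite_measure_mono) auto
    have "ln (measure M (a \<inter> c) / measure M c) \<le> 0"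
    proof (cases "measure M (a \<inter> c) = 0")
      case False
      then have "0 < measure M (a \<inter> c)" using measure_nonneg[of M] by (simp add: less_le)
      then show ?thesis using le by (simp add: ln_div)
    qed simp
    then show ?thesis by (simp add: mult_nonneg_nonpos)
  qed
  then show ?thesis unfolding cond_entropy_def by (simp add: sum_nonpos)
qed

lemma measure_coarse_cell:
  assumes B: "fin_partition M B" and B': "fin_partition M B'"
    and g: "\<And>b'. b' \<in> B' \<Longrightarrow> g b' \<in> B \<and> b' \<subseteq> g b'"
    and b: "b \<in> B" and X: "X \<in> sets M"
  shows "measure M (X \<inter> b) = (\<Sum>b'\<in>{b'\<in>B'. g b' = b}. measure M (X \<inter> b'))"
proof -
  let ?G = "{b'\<in>B'. g b' = b}"
  have "measure M (\<Union>b'\<in>?G. X \<inter> b') = (\<Sum>b'\<in>?G. measure M (X \<inter> b'))"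
  proof (intro finite_measure_finite_Union)
    show "finite ?G" using B' unfolding fin_partition_def by simp
    show "(\<lambda>b'. X \<inter> b') ` ?G \<subseteq> sets M" using B' X unfolding fin_partition_def by auto
    show "disjoint_family_on (\<lambda>b'. X \<inter> b') ?G" using B'
      unfolding disjoint_family_on_def fin_partition_def by blast
  qed
  moreover have "(\<Union>b'\<in>?G. X \<inter> b') = X \<inter> b"
  proof
    show "X \<inter> b \<subseteq> (\<Union>b'\<in>?G. X \<inter> b')"
    proof
      fix x assume x: "x \<in> X \<inter> b"
      then have "x \<in> space M" using b B sets.sets_into_space unfolding fin_partition_def by blast
      then obtain b' where b': "b' \<in> B'" "x \<in> b'" using B' unfolding fin_partition_def by blast
      then have "g b' = b" using g[OF b'(1)] x b B unfolding fin_partition_def by blast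
      then show "x \<in> (\<Union>b'\<in>?G. X \<inter> b')" using b' x by blast
    qed
  qed (use g in blast)
  ultimately show ?thesis by simp
qed

text \<open>Conditioning on a finer partition does not increase entropy; the log-sum inequality
  is applied to the cells of \<open>B'\<close> inside each cell of \<open>B\<close>.\<close>
lemma cond_entropy_antimono:
  assumes C: "fin_partition M C" and B: "fin_partition M B" and B': "fin_partition M B'"
    and finer: "\<And>b'. b' \<in> B' \<Longrightarrow> \<exists>b\<in>B. b' \<subseteq> b"
  shows "cond_entropy M C B' \<le> cond_entropy M C B"
proof -
  define g where "g b' = (SOME b. b \<in> B \<and> b' \<subseteq> b)" for b'
  have g: "g b' \<in> B \<and> b' \<subseteq> g b'" if "b' \<in> B'" for b'
    using someI_ex[OF finer[OF that, unfolded Bex_def]] unfolding g_def .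
  have sets: "B \<subseteq> sets M" "B' \<subseteq> sets M" "C \<subseteq> sets M" and fin: "finite B" "finite B'"
    using B B' C unfolding fin_partition_def by auto
  let ?phi = "\<lambda>c b. measure M (c \<inter> b) * ln (measure M (c \<inter> b) / measure M b)"
  have "(\<Sum>b\<in>B. ?phi c b) \<le> (\<Sum>b'\<in>B'. ?phi c b')" if c: "c \<in> C" for c
  proof -
    have "(\<Sum>b\<in>B. ?phi c b) \<le> (\<Sum>b\<in>B. \<Sum>b'\<in>{b'\<in>B'. g b' = b}. ?phi c b')"
    proof (rule sum_mono)
      fix b assume b: "b \<in> B"
      have "space M \<inter> x = x" if "x \<in> B \<union> B'" for x
        using that sets sets.sets_into_space by blast
      then have cell: "measure M b = (\<Sum>b'\<in>{b'\<in>B'. g b' = b}. measure M b')"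
        using measure_coarse_cell[OF B B' g b, of "space M"] b by simp
      have joint: "measure M (c \<inter> b) = (\<Sum>b'\<in>{b'\<in>B'. g b' = b}. measure M (c \<inter> b'))"
        using measure_coarse_cell[OF B B' g b] c sets by blast
      show "?phi c b \<le> (\<Sum>b'\<in>{b'\<in>B'. g b' = b}. ?phi c b')"
        unfolding cell joint
        using fin sets by (intro log_sum_inequality) (auto intro!: finite_measure_mono)
    qed
    also have "\<dots> = (\<Sum>b'\<in>B'. ?phi c b')"
      using fin g by (intro sum.group) auto
    finally show ?thesis .
  qed
  then show ?thesis unfolding cond_entropy_def by (simp add: sum_mono)
qed

end


section \<open>The refined partitions \<open>P^F\<close>\<close>

lemma funpow_measurable: "f \<in> M \<rightarrow>\<^sub>M M \<Longrightarrow> f ^^ n \<in> M \<rightarrow>\<^sub>M M"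
  by (induction n) (auto intro: measurable_comp)

locale partitioned_system =
  fixes M :: "'a measure" and T :: "'a \<Rightarrow> 'a" and P :: "'a set set"
  assumes system: "pp_system M T" and partition: "fin_partition M P"
begin

sublocale prob_space M using system unfolding pp_system_def by simp

lemma T_measurable: "T \<in> M \<rightarrow>\<^sub>M M"
  and T_bij: "bij_betw T (space M) (space M)"
  and T_preserving: "\<And>A. A \<in> sets M \<Longrightarrow> measure M (T -` A \<inter> space M) = measure M A"
  and T_inv_measurable: "inv_into (space M) T \<in> M \<rightarrow>\<^sub>M M"
  using system unfolding pp_system_def by auto

lemma P_sets: "P \<subseteq> sets M" and P_finite: "finite P" and P_covers: "\<Union>P = space M"
  using partition unfolding fin_partition_def by auto

lemmas P_cell_unique = partition_cell_unique[OF partition]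

lemma Tpow_measurable: "Tpow M T n \<in> M \<rightarrow>\<^sub>M M"
  unfolding Tpow_def
  using funpow_measurable[OF T_measurable] funpow_measurable[OF T_inv_measurable] by simp

lemma Tpow_space: "x \<in> space M \<Longrightarrow> Tpow M T n x \<in> space M"
  using measurable_space[OF Tpow_measurable] by blast

lemma Tpow_succ:
  assumes x: "x \<in> space M"
  shows "Tpow M T (k + 1) x = Tpow M T k (T x)"
proof -
  have inv: "inv_into (space M) T (T x) = x"
    using T_bij x by (simp add: bij_betw_def inv_into_f_f)
  consider "0 \<le> k" | "k = -1" | "k < -1" by linarith
  then show ?thesis
  proof cases
    case 1
    then have "nat (k + 1) = Suc (nat k)" by simp
    then show ?thesis using 1 unfolding Tpow_def by (simp add: funpow_Suc_right del: funpow.simps)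
  next
    case 3
    then have "nat (- k) = Suc (nat (- (k + 1)))" by simp
    then show ?thesis using 3 inv unfolding Tpow_def
      by (simp add: funpow_Suc_right del: funpow.simps)
  qed (use inv in \<open>simp add: Tpow_def\<close>)
qed

definition cell :: "int set \<Rightarrow> (int \<Rightarrow> 'a set) \<Rightarrow> 'a set" where
  "cell F w = space M \<inter> (\<Inter>n\<in>F. Tpow M T n -` w n)"

lemma mem_cell: "x \<in> cell F w \<longleftrightarrow> x \<in> space M \<and> (\<forall>n\<in>F. Tpow M T n x \<in> w n)"
  unfolding cell_def by auto

lemma cell_Un: "cell (F \<union> G) w = cell F w \<inter> cell G w"
  unfolding cell_def by auto

lemma mem_refine: "C \<in> refine M T P F \<longleftrightarrow> (\<exists>w. (\<forall>n\<in>F. w n \<in> P) \<and> C = cell F w) \<and> C \<noteq> {}"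
  unfolding refine_def cell_def by blast

lemma cell_sets:
  assumes "finite F" "\<And>n. n \<in> F \<Longrightarrow> w n \<in> P"
  shows "cell F w \<in> sets M"
proof -
  have "{x \<in> space M. Tpow M T n x \<in> w n} \<in> sets M" if "n \<in> F" for n
  proof -
    have "Tpow M T n -` w n \<inter> space M \<in> sets M"
      using assms P_sets that by (intro measurable_sets[OF Tpow_measurable]) auto
    moreover have "{x \<in> space M. Tpow M T n x \<in> w n} = Tpow M T n -` w n \<inter> space M" by auto
    ultimately show ?thesis by simp
  qed
  then have "{x \<in> space M. \<forall>n\<in>F. Tpow M T n x \<in> w n} \<in> sets M"
    using assms(1) by (intro sets.sets_Collect_finite_All)
  moreover have "cell F w = {x \<in> space M. \<forall>n\<in>F. Tpow M T n x \<in> w n}"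
    by (auto simp: mem_cell)
  ultimately show ?thesis by simp
qed

lemma refine_finite:
  assumes "finite F"
  shows "finite (refine M T P F)"
proof -
  have "refine M T P F \<subseteq> cell F ` PiE F (\<lambda>_. P)"
  proof
    fix C assume "C \<in> refine M T P F"
    then obtain w where w: "\<forall>n\<in>F. w n \<in> P" "C = cell F w" unfolding mem_refine by blast
    then have "C = cell F (restrict w F)" "restrict w F \<in> PiE F (\<lambda>_. P)"
      unfolding cell_def by auto
    then show "C \<in> cell F ` PiE F (\<lambda>_. P)" by blast
  qed
  moreover have "finite (PiE F (\<lambda>_. P))" using assms P_finite by (intro finite_PiE) auto
  ultimately show ?thesis by (meson finite_subset finite_imageI)
qed

text \<open>Every point lies in the cell of its own itinerary.\<close>
lemma refine_covers: "\<Union> (refine M T P F) = space M"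
proof
  show "\<Union> (refine M T P F) \<subseteq> space M" unfolding refine_def by auto
  show "space M \<subseteq> \<Union> (refine M T P F)"
  proof
    fix x assume x: "x \<in> space M"
    define w where "w n = (SOME p. p \<in> P \<and> Tpow M T n x \<in> p)" for n
    have w: "w n \<in> P \<and> Tpow M T n x \<in> w n" for n
    proof -
      have "\<exists>p. p \<in> P \<and> Tpow M T n x \<in> p" using Tpow_space[OF x] P_covers by auto
      then show ?thesis unfolding w_def by (rule someI_ex)
    qed
    then have x_cell: "x \<in> cell F w" using x by (simp add: mem_cell)
    then have "cell F w \<in> refine M T P F" unfolding mem_refine using w by (auto intro: exI[of _ w])
    then show "x \<in> \<Union> (refine M T P F)" using x_cell by blast
  qed
qed

lemma refine_disjoint:
  assumes "A \<in> refine M T P F" "B \<in> refine M T P F" "A \<noteq> B"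
  shows "A \<inter> B = {}"
proof (rule ccontr)
  obtain w v where w: "\<forall>n\<in>F. w n \<in> P" "A = cell F w" and v: "\<forall>n\<in>F. v n \<in> P" "B = cell F v"
    using assms(1,2) unfolding mem_refine by blast
  assume "A \<inter> B \<noteq> {}"
  then obtain x where x: "x \<in> cell F w" "x \<in> cell F v" using w v by blast
  have "w n = v n" if "n \<in> F" for n
    using P_cell_unique[of "w n" "v n" "Tpow M T n x"] x w v that by (simp add: mem_cell)
  then have "A = B" unfolding w v cell_def by auto
  then show False using assms(3) by simp
qed

lemma refine_sets: "finite F \<Longrightarrow> refine M T P F \<subseteq> sets M"
  using cell_sets by (auto simp: mem_refine)

lemma refine_partition: "finite F \<Longrightarrow> fin_partition M (refine M T P F)"
  unfolding fin_partition_def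
  by (intro conjI ballI impI refine_finite refine_sets refine_covers refine_disjoint)

text \<open>\<open>P^F \<or> P^G = P^(F \<union> G)\<close>: a nonempty intersection of cells forces the
  itineraries to agree on \<open>F \<inter> G\<close>, so they glue to one itinerary on \<open>F \<union> G\<close>.\<close>
lemma refine_join: "join (refine M T P F) (refine M T P G) = refine M T P (F \<union> G)"
proof
  show "join (refine M T P F) (refine M T P G) \<subseteq> refine M T P (F \<union> G)"
  proof
    fix C assume C: "C \<in> join (refine M T P F) (refine M T P G)"
    then obtain w v where w: "\<forall>n\<in>F. w n \<in> P" and v: "\<forall>n\<in>G. v n \<in> P"
      and C_eq: "C = cell F w \<inter> cell G v" and C_ne: "C \<noteq> {}"
      unfolding join_def mem_refine by blast
    obtain x where x: "x \<in> C" using C_ne by blast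
    define u where "u n = (if n \<in> F then w n else v n)" for n
    have agree: "w n = v n" if "n \<in> F" "n \<in> G" for n
      using P_cell_unique[of "w n" "v n" "Tpow M T n x"] x w v that
      unfolding C_eq by (simp add: mem_cell)
    have "C = cell (F \<union> G) u"
    proof (rule set_eqI)
      fix y
      have "y \<in> C \<longleftrightarrow> y \<in> space M \<and> (\<forall>n\<in>F. Tpow M T n y \<in> w n) \<and> (\<forall>n\<in>G. Tpow M T n y \<in> v n)"
        unfolding C_eq Int_iff mem_cell by blast
      also have "\<dots> \<longleftrightarrow> y \<in> cell (F \<union> G) u"
        unfolding mem_cell u_def using agree by (auto split: if_splits)
      finally show "y \<in> C \<longleftrightarrow> y \<in> cell (F \<union> G) u" .
    qed
    moreover have "\<forall>n\<in>F \<union> G. u n \<in> P" using w v unfolding u_def by auto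
    ultimately show "C \<in> refine M T P (F \<union> G)" unfolding mem_refine using C_ne by blast
  qed
  show "refine M T P (F \<union> G) \<subseteq> join (refine M T P F) (refine M T P G)"
  proof
    fix C assume "C \<in> refine M T P (F \<union> G)"
    then obtain w where w: "\<forall>n\<in>F \<union> G. w n \<in> P" "C = cell F w \<inter> cell G w" "C \<noteq> {}"
      unfolding mem_refine cell_Un by blast
    then have "cell F w \<in> refine M T P F" "cell G w \<in> refine M T P G"
      unfolding mem_refine by blast+
    then show "C \<in> join (refine M T P F) (refine M T P G)"
      unfolding join_def using w by blast
  qed
qed

lemma refine_finer:
  assumes "C \<in> refine M T P (F \<union> G)"
  shows "\<exists>D\<in>refine M T P F. C \<subseteq> D"
proof -
  obtain w where w: "\<forall>n\<in>F \<union> G. w n \<in> P" "C = cell F w \<inter> cell G w" "C \<noteq> {}"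
    using assms unfolding mem_refine cell_Un by blast
  then have "cell F w \<in> refine M T P F" unfolding mem_refine by blast
  then show ?thesis using w(2) by blast
qed

lemma T_image_preimage:
  assumes sub: "C \<subseteq> space M"
  shows "T ` (T -` C \<inter> space M) = C"
proof
  show "C \<subseteq> T ` (T -` C \<inter> space M)"
  proof
    fix y assume y: "y \<in> C"
    have "T ` space M = space M" using T_bij by (simp add: bij_betw_def)
    then obtain x where "x \<in> space M" "y = T x" using y sub by (metis imageE subsetD)
    then show "y \<in> T ` (T -` C \<inter> space M)" using y by blast
  qed
qed auto

lemma refine_shift: "refine M T P ((\<lambda>n. n + 1) ` F) = (\<lambda>C. T -` C \<inter> space M) ` refine M T P F"
proof -
  have shift_cell: "cell ((\<lambda>n. n + 1) ` F) w = T -` cell F (\<lambda>k. w (k + 1)) \<inter> space M" for w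
  proof (rule set_eqI)
    fix x
    show "x \<in> cell ((\<lambda>n. n + 1) ` F) w \<longleftrightarrow> x \<in> T -` cell F (\<lambda>k. w (k + 1)) \<inter> space M"
    proof (cases "x \<in> space M")
      case True
      then have "T x \<in> space M" using measurable_space[OF T_measurable] by blast
      then show ?thesis using True by (simp add: mem_cell Tpow_succ)
    qed (simp add: mem_cell)
  qed
  show ?thesis
  proof
    show "refine M T P ((\<lambda>n. n + 1) ` F) \<subseteq> (\<lambda>C. T -` C \<inter> space M) ` refine M T P F"
    proof
      fix C assume "C \<in> refine M T P ((\<lambda>n. n + 1) ` F)"
      then obtain w where w: "\<forall>n\<in>F. w (n + 1) \<in> P"
        and C: "C = T -` cell F (\<lambda>k. w (k + 1)) \<inter> space M" "C \<noteq> {}"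
        unfolding mem_refine shift_cell by auto
      then have "cell F (\<lambda>k. w (k + 1)) \<in> refine M T P F" unfolding mem_refine by auto
      then show "C \<in> (\<lambda>C. T -` C \<inter> space M) ` refine M T P F" using C by blast
    qed
    show "(\<lambda>C. T -` C \<inter> space M) ` refine M T P F \<subseteq> refine M T P ((\<lambda>n. n + 1) ` F)"
    proof
      fix C assume "C \<in> (\<lambda>C. T -` C \<inter> space M) ` refine M T P F"
      then obtain D where D: "D \<in> refine M T P F" and C_D: "C = T -` D \<inter> space M" by blast
      then obtain v where v: "\<forall>n\<in>F. v n \<in> P" "cell F v \<noteq> {}" and D_v: "D = cell F v"
        unfolding mem_refine by blast
      have C: "C = T -` cell F v \<inter> space M" using C_D D_v by simp
      have "C = cell ((\<lambda>n. n + 1) ` F) (\<lambda>n. v (n - 1))" unfolding C shift_cell by simp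
      moreover have "T ` C = cell F v"
        unfolding C by (rule T_image_preimage) (auto simp: cell_def)
      then have "C \<noteq> {}" using v(2) by auto
      moreover have "\<forall>n\<in>(\<lambda>n. n + 1) ` F. v (n - 1) \<in> P" using v(1) by auto
      ultimately show "C \<in> refine M T P ((\<lambda>n. n + 1) ` F)"
        unfolding mem_refine by (intro conjI exI[where x = "\<lambda>n. v (n - 1)"])
    qed
  qed
qed

lemma part_entropy_preimage:
  assumes A: "fin_partition M A"
  shows "part_entropy M ((\<lambda>C. T -` C \<inter> space M) ` A) = part_entropy M A"
proof -
  have sets: "C \<in> sets M" if "C \<in> A" for C using A that unfolding fin_partition_def by auto
  have "T ` (T -` C \<inter> space M) = C" if "C \<in> A" for C
    by (rule T_image_preimage[OF sets.sets_into_space[OF sets[OF that]]])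
  then have inj: "inj_on (\<lambda>C. T -` C \<inter> space M) A" by (rule inj_on_inverseI)
  show ?thesis
    unfolding part_entropy_def sum.reindex[OF inj] by (simp add: T_preserving sets)
qed


section \<open>Block entropies\<close>

definition ent :: "int set \<Rightarrow> real" where
  "ent F = part_entropy M (refine M T P F)"

lemma cond_entropy_refine:
  "finite F \<Longrightarrow> finite G \<Longrightarrow> cond_entropy M (refine M T P F) (refine M T P G) = ent (F \<union> G) - ent G"
  unfolding ent_def by (simp add: cond_entropy_eq refine_partition refine_join)

lemma ent_shift1: "finite F \<Longrightarrow> ent ((\<lambda>n. n + 1) ` F) = ent F"
  unfolding ent_def refine_shift by (simp add: part_entropy_preimage refine_partition)

lemma ent_translate:
  assumes "finite F"
  shows "ent ((\<lambda>n. n + t) ` F) = ent F"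
proof -
  have step: "ent ((\<lambda>n. n + (s + 1)) ` F) = ent ((\<lambda>n. n + s) ` F)" for s
  proof -
    have "(\<lambda>n. n + (s + 1)) ` F = (\<lambda>n. n + 1) ` ((\<lambda>n. n + s) ` F)"
      unfolding image_image by (simp add: add.assoc)
    then show ?thesis using ent_shift1 assms by simp
  qed
  show ?thesis
  proof (induction t rule: int_induct[where k = 0])
    case (step1 i) then show ?case using step[of i] by simp
  next
    case (step2 i) then show ?case using step[of "i - 1"] by simp
  qed simp
qed

definition block_ent :: "nat \<Rightarrow> real" where
  "block_ent n = ent {0..int n - 1}"

lemma dinterval_atLeastAtMost [simp]: "dinterval {a..b}"
  unfolding dinterval_def by blast

lemma ent_interval:
  assumes "dinterval F"
  shows "ent F = block_ent (card F)"
proof -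
  obtain a b where F: "F = {a..b}" using assms unfolding dinterval_def by blast
  have "(\<lambda>n. n + a) ` {0..b - a} = {a..b}"
    by (auto simp: image_iff intro!: bexI[where x = "_ - a"])
  moreover have "{0..int (card {a..b}) - 1} = {0..b - a}" by auto
  ultimately show ?thesis unfolding F block_ent_def using ent_translate[of "{0..b - a}" a] by simp
qed

definition ent_gain :: "nat \<Rightarrow> real" where
  "ent_gain n = block_ent (Suc n) - block_ent n"

lemma ent_gain_cond_entropy:
  "ent_gain n = cond_entropy M (refine M T P {0}) (refine M T P {1..int n})"
proof -
  have "card {0..int n} = Suc n" by simp
  then have "ent {0..int n} = block_ent (Suc n)"
    using ent_interval[of "{0..int n}"] by simp
  moreover have "ent {1..int n} = block_ent n"
    using ent_interval[of "{1..int n}"] by simp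
  moreover have "{0} \<union> {1..int n} = {0..int n}" by auto
  ultimately show ?thesis unfolding ent_gain_def by (simp add: cond_entropy_refine)
qed

lemma ent_gain_nonneg: "0 \<le> ent_gain n"
  unfolding ent_gain_cond_entropy by (intro cond_entropy_nonneg refine_partition) auto

lemma ent_gain_decseq: "decseq ent_gain"
proof (rule decseq_SucI)
  fix n
  have "{1..int (Suc n)} = {1..int n} \<union> {int n + 1}" by auto
  then have "\<exists>D\<in>refine M T P {1..int n}. C \<subseteq> D" if "C \<in> refine M T P {1..int (Suc n)}" for C
    using refine_finer[of C "{1..int n}" "{int n + 1}"] that by argo
  then show "ent_gain (Suc n) \<le> ent_gain n" unfolding ent_gain_cond_entropy
    by (intro cond_entropy_antimono refine_partition) auto
qed

lemma ent_gain_bdd_below: "bdd_below (range ent_gain)"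
  using ent_gain_nonneg by (intro bdd_belowI) auto

lemma block_ent_telescope: "block_ent (k + m) - block_ent k = (\<Sum>j<m. ent_gain (k + j))"
  by (induction m) (simp_all add: ent_gain_def)

text \<open>The conditional mutual information of interval refinements, expressed through
  block entropies; here \<open>I \<inter> J \<subseteq> I\<close> collapses the join in the second term.\<close>
lemma mutual_info_intervals:
  assumes I: "dinterval I" and J: "dinterval J" and IJ: "dinterval (I \<union> J)"
  shows "cond_mutual_info M (refine M T P J) (refine M T P I) (refine M T P (I \<inter> J))
    = (block_ent (card (I \<inter> J) + card (J - I)) - block_ent (card (I \<inter> J)))
      - (block_ent (card I + card (J - I)) - block_ent (card I))"
proof -
  have fin: "finite I" "finite J" using I J unfolding dinterval_def by auto
  have K: "dinterval (I \<inter> J)"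
  proof -
    obtain a b c d where "I = {a..b}" "J = {c..d}" using I J unfolding dinterval_def by blast
    then have "I \<inter> J = {max a c..min b d}" by auto
    then show ?thesis unfolding dinterval_def by blast
  qed
  have "join (refine M T P I) (refine M T P (I \<inter> J)) = refine M T P I"
    by (simp add: refine_join Un_absorb2)
  then have "cond_mutual_info M (refine M T P J) (refine M T P I) (refine M T P (I \<inter> J))
     = (ent J - ent (I \<inter> J)) - (ent (I \<union> J) - ent I)"
    unfolding cond_mutual_info_def using fin
    by (simp add: cond_entropy_refine Un_absorb2 Un_commute)
  moreover have "card J = card (I \<inter> J) + card (J - I)"
    using fin card_Int_Diff[of J I] by (simp add: Int_commute)
  moreover have "card (I \<union> J) = card I + card (J - I)"
    using fin by (metis Un_Diff_cancel card_Un_disjoint Diff_disjoint finite_Diff)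
  ultimately show ?thesis using ent_interval I J K IJ by simp
qed

lemma mutual_info_le_excess:
  assumes I: "dinterval I" and J: "dinterval J" and IJ: "dinterval (I \<union> J)"
  shows "cond_mutual_info M (refine M T P J) (refine M T P I) (refine M T P (I \<inter> J))
    \<le> (\<Sum>j<card (J - I). ent_gain j - Inf (range ent_gain))"
proof -
  let ?r = "card (I \<inter> J)" and ?p = "card I" and ?h = "Inf (range ent_gain)"
  have "?h \<le> ent_gain j" for j using ent_gain_bdd_below by (simp add: cInf_lower)
  moreover have "ent_gain (?r + j) \<le> ent_gain j" for j
    using decseqD[OF ent_gain_decseq] by simp
  ultimately have "(\<Sum>j<card (J - I). ent_gain (?r + j) - ent_gain (?p + j))
      \<le> (\<Sum>j<card (J - I). ent_gain j - ?h)"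
    by (intro sum_mono diff_mono) auto
  then show ?thesis
    unfolding mutual_info_intervals[OF assms] block_ent_telescope by (simp add: sum_subtractf)
qed

end


section \<open>A Cesaro lemma\<close>

lemma decseq_excess_sum_small_o:
  fixes c :: "nat \<Rightarrow> real"
  assumes dec: "decseq c" and bdd: "bdd_below (range c)"
  shows "(\<lambda>m. \<Sum>j<m. c j - Inf (range c)) \<in> o(\<lambda>m. real m)"
proof (rule landau_o.smallI)
  fix eps :: real assume eps: "0 < eps"
  let ?h = "Inf (range c)"
  have excess_nonneg: "0 \<le> c j - ?h" for j using bdd by (simp add: cInf_lower)
  have "Inf (range c) < ?h + eps / 2" using eps by simp
  then obtain N where N: "c N < ?h + eps / 2" using bdd by (subst (asm) cInf_less_iff) auto
  have tail: "c j - ?h \<le> eps / 2" if "N \<le> j" for j using decseqD[OF dec that] N by simp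
  define head where "head = (\<Sum>j<N. c j - ?h)"
  show "eventually (\<lambda>m. norm (\<Sum>j<m. c j - ?h) \<le> eps * norm (real m)) at_top"
    using eventually_ge_at_top[of "max N (nat \<lceil>2 * head / eps\<rceil>)"]
  proof eventually_elim
    case (elim m)
    then have Nm: "N \<le> m" and "2 * head / eps \<le> real m" by linarith+
    then have head_le: "head \<le> real m * eps / 2" using eps by (simp add: field_simps)
    have "(\<Sum>j<m. c j - ?h) = head + (\<Sum>j\<in>{N..<m}. c j - ?h)"
      unfolding head_def lessThan_atLeast0 using sum.atLeastLessThan_concat[of 0 N m "\<lambda>j. c j - ?h"] Nm by simp
    also have "(\<Sum>j\<in>{N..<m}. c j - ?h) \<le> real (m - N) * (eps / 2)"
      using sum_mono[of "{N..<m}" "\<lambda>j. c j - ?h" "\<lambda>_. eps / 2"] tail by simp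
    also have "real (m - N) * (eps / 2) \<le> real m * (eps / 2)"
      using eps by (intro mult_right_mono) auto
    finally have "(\<Sum>j<m. c j - ?h) \<le> eps * real m" using head_le by (simp add: field_simps)
    moreover have "0 \<le> (\<Sum>j<m. c j - ?h)" using excess_nonneg by (intro sum_nonneg)
    ultimately show ?case by simp
  qed
qed


theorem mainTheorem14:
  assumes "pp_system M T" and "fin_partition M P"
  shows "\<exists>g :: nat \<Rightarrow> real. (\<forall>m. 0 \<le> g m) \<and> g \<in> o(\<lambda>m. real m) \<and>
    (\<forall>I J. dinterval I \<and> dinterval J \<and> dinterval (I \<union> J) \<longrightarrow>
       cond_mutual_info M (refine M T P J) (refine M T P I) (refine M T P (I \<inter> J))
         \<le> g (card (J - I)))"
proof -
  interpret partitioned_system M T P using assms by unfold_locales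
  define g where "g m = (\<Sum>j<m. ent_gain j - Inf (range ent_gain))" for m
  have "0 \<le> g m" for m
    unfolding g_def using ent_gain_bdd_below by (intro sum_nonneg) (simp add: cInf_lower)
  moreover have "g \<in> o(\<lambda>m. real m)"
    unfolding g_def by (rule decseq_excess_sum_small_o[OF ent_gain_decseq ent_gain_bdd_below])
  moreover have "\<forall>I J. dinterval I \<and> dinterval J \<and> dinterval (I \<union> J) \<longrightarrow>
      cond_mutual_info M (refine M T P J) (refine M T P I) (refine M T P (I \<inter> J))
        \<le> g (card (J - I))"
    unfolding g_def using mutual_info_le_excess by blast
  ultimately show ?thesis by blast
qed

end
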